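(* Let $W$ be a binary-input channel and define recursively $L_0=R_0=W$ and, for $n=0,1,2,\dots$, $L_{n+1}=(L_n,R_n)^-$ and $R_{n+1}=(L_n,R_n)^+$. Then the limits $I(L_\infty):=\lim_{n\to\infty}I(L_n)$ and $I(R_\infty):=\lim_{n\to\infty}I(R_n)$ exist, and: (i) if $I(W)\ge 1/2$, then $I(L_\infty)=2I(W)-1$ and $I(R_\infty)=1$; (ii) if $I(W)\le 1/2$, then $I(L_\infty)=0$ and $I(R_\infty)=2I(W)$.
   Context: A binary-input channel $W\colon\{0,1\}\to\mathcal{Y}$ is a family of transition probabilities $W(y\mid x)$ on a discrete output alphabet $\mathcal{Y}$. Its symmetric capacity $I(W)$ is the mutual information (in bits) $I(X;Y)$ between a uniformly distributed input $X\in\{0,1\}$ and the corresponding output $Y$. For binary-input channels $W\colon\{0,1\}\to\mathcal{Y}$ and $V\colon\{0,1\}\to\mathcal{Z}$ define the binary-input channels $(W,V)^-\colon\{0,1\}\to\mathcal{Y}\times\mathcal{Z}$ and $(W,V)^+\colon\{0,1\}\to\mathcal{Y}\times\mathcal{Z}\times\{0,1\}$ by $(W,V)^-(y,z\mid x)=\sum_{u\in\{0,1\}}\tfrac12 W(y\mid u+x)V(z\mid u)$ and $(W,V)^+(y,z,u\mid x)=\tfrac12 W(y\mid u+x)V(z\mid x)$, where addition is modulo 2. *)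

theory Defs
  imports "HOL-Analysis.Analysis"
begin

text \<open>Inputs {0,1} are encoded as bool (False = 0, True = 1); addition modulo 2 of
 u and x is (u \<noteq> x).  A channel is a family of transition probabilities W x y = W(y|x).\<close>

type_synonym 'o channel = "bool \<Rightarrow> 'o \<Rightarrow> real"

definition is_channel :: "'o channel \<Rightarrow> bool" where
  "is_channel W \<longleftrightarrow> (\<forall>x y. 0 \<le> W x y) \<and> (\<forall>x. (W x has_sum 1) UNIV)"

definition sym_cap :: "'o channel \<Rightarrow> real" where
  "sym_cap W = (\<Sum>\<^sub>\<infinity>y. \<Sum>x\<in>UNIV. (1/2) * W x y *
      (if W x y = 0 then 0 else log 2 (W x y / ((1/2) * W False y + (1/2) * W True y))))"

text \<open>A single output type closed under the channel combining operations:
 outputs of (W,V)^- are pairs (y,z), outputs of (W,V)^+ are triples (y,z,u).\<close>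
datatype 'y out = Base 'y | MinusOut "'y out" "'y out" | PlusOut "'y out" "'y out" bool

definition lift_chan :: "'y channel \<Rightarrow> 'y out channel" where
  "lift_chan W = (\<lambda>x w. case w of Base y \<Rightarrow> W x y | _ \<Rightarrow> 0)"

definition chan_minus :: "'y out channel \<Rightarrow> 'y out channel \<Rightarrow> 'y out channel" where
  "chan_minus W V = (\<lambda>x w. case w of
      MinusOut y z \<Rightarrow> (\<Sum>u\<in>UNIV. (1/2) * W (u \<noteq> x) y * V u z) | _ \<Rightarrow> 0)"

definition chan_plus :: "'y out channel \<Rightarrow> 'y out channel \<Rightarrow> 'y out channel" where
  "chan_plus W V = (\<lambda>x w. case w of
      PlusOut y z u \<Rightarrow> (1/2) * W (u \<noteq> x) y * V x z | _ \<Rightarrow> 0)"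

fun LR :: "'y channel \<Rightarrow> nat \<Rightarrow> 'y out channel \<times> 'y out channel" where
  "LR W 0 = (lift_chan W, lift_chan W)"
| "LR W (Suc n) = (case LR W n of (L, R) \<Rightarrow> (chan_minus L R, chan_plus L R))"

end

theory Submission
  imports Defs
begin

text \<open>Along the recursion the capacity is conserved, \<open>I(L\<^sub>n) + I(R\<^sub>n) = 2 I(W)\<close>, while the
  Bhattacharyya parameter \<open>Z(V) = \<Sum>\<^sub>y sqrt (V(y|0) V(y|1))\<close> is multiplicative on the plus side,
  \<open>Z(R\<^sub>n\<^sub>+\<^sub>1) = Z(L\<^sub>n) Z(R\<^sub>n)\<close>; so \<open>Z(R\<^sub>n)\<close> decreases to some limit \<open>d\<close>. Capacity and
  Bhattacharyya parameter control each other: \<open>1 - I(V) \<le> (2 / ln 2) Z(V)\<close> and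
  \<open>I(V) \<le> (2 / ln 2) (1 - Z(V))\<close>. If \<open>d = 0\<close> this forces \<open>I(R\<^sub>n) \<longrightarrow> 1\<close>; if \<open>d > 0\<close> then
  \<open>Z(L\<^sub>n) = Z(R\<^sub>n\<^sub>+\<^sub>1) / Z(R\<^sub>n) \<longrightarrow> 1\<close> and hence \<open>I(L\<^sub>n) \<longrightarrow> 0\<close>. Conservation yields the other
  limit, and \<open>0 \<le> I \<le> 1\<close> tells which case occurs.\<close>

definition xlogx :: "real \<Rightarrow> real" where
  "xlogx t = t * log 2 t"

text \<open>The contribution to the symmetric capacity of an output letter received with probabilities
  \<open>p\<close> and \<open>r\<close> under the two inputs: the Jensen gap of \<open>t log t\<close>.\<close>

definition cap_term :: "real \<Rightarrow> real \<Rightarrow> real" where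
  "cap_term p r = (xlogx p + xlogx r) / 2 - xlogx ((p + r) / 2)"

lemma cap_term_0_0 [simp]: "cap_term 0 0 = 0"
  by (simp add: cap_term_def xlogx_def)

lemma xlogx_mult:
  assumes "a \<ge> 0" "b \<ge> 0"
  shows "xlogx (a * b) = a * xlogx b + b * xlogx a"
proof (cases "a = 0 \<or> b = 0")
  case False
  then show ?thesis using assms by (simp add: xlogx_def log_mult algebra_simps)
qed (auto simp: xlogx_def)

lemma xlogx_half:
  assumes "x \<ge> 0"
  shows "xlogx (x / 2) = (xlogx x - x) / 2"
proof (cases "x = 0")
  case False
  then show ?thesis using assms by (simp add: xlogx_def log_divide algebra_simps)
qed (simp add: xlogx_def)

lemma mult_log_divide:
  assumes "a \<ge> 0" "m > 0"
  shows "a * log 2 (a / m) = xlogx a - a * log 2 m"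
proof (cases "a = 0")
  case False
  then show ?thesis using assms by (simp add: xlogx_def log_divide algebra_simps)
qed (simp add: xlogx_def)

lemma cap_term_eq_log:
  assumes "p \<ge> 0" "r \<ge> 0" "p + r > 0"
  shows "cap_term p r = (p * log 2 (p / ((p + r) / 2)) + r * log 2 (r / ((p + r) / 2))) / 2"
  using mult_log_divide[OF assms(1), of "(p + r) / 2"] mult_log_divide[OF assms(2), of "(p + r) / 2"]
    assms(3)
  by (simp add: cap_term_def xlogx_def algebra_simps add_divide_distrib)

lemma cap_term_eq_ln:
  assumes "p \<ge> 0" "r \<ge> 0" "p + r > 0"
  shows "2 * ln 2 * cap_term p r = p * ln (p / ((p + r) / 2)) + r * ln (r / ((p + r) / 2))"
  unfolding cap_term_eq_log[OF assms] log_def by (simp add: field_simps)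

lemma sym_cap_summand_eq_cap_term:
  assumes "p \<ge> 0" "r \<ge> 0"
  shows "(1/2) * p * (if p = 0 then 0 else log 2 (p / ((1/2) * p + (1/2) * r))) +
         (1/2) * r * (if r = 0 then 0 else log 2 (r / ((1/2) * p + (1/2) * r))) = cap_term p r"
proof (cases "p + r = 0")
  case True
  then have "p = 0" "r = 0" using assms by auto
  then show ?thesis by simp
next
  case False
  then have "p + r > 0" using assms by simp
  moreover have "(1/2) * p + (1/2) * r = (p + r) / 2" by simp
  ultimately show ?thesis using assms by (simp add: cap_term_eq_log field_simps)
qed

subsection \<open>Elementary logarithmic inequalities\<close>

lemma mult_ln_divide_ge:
  fixes a m :: real
  assumes "a \<ge> 0" "m > 0"
  shows "a - m \<le> a * ln (a / m)"
proof (cases "a = 0")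
  case False
  then have a: "a > 0" using assms by simp
  have "ln (m / a) \<le> m / a - 1" using a assms by (intro ln_le_minus_one) auto
  moreover have "ln (a / m) = - ln (m / a)" using a assms by (simp add: ln_div)
  ultimately have "a * (1 - m / a) \<le> a * ln (a / m)" using a by (intro mult_left_mono) auto
  moreover have "a * (1 - m / a) = a - m" using a by (simp add: field_simps)
  ultimately show ?thesis by simp
qed (use assms in \<open>simp add: add_nonneg_eq_0_iff\<close>)

lemma mult_ln_divide_le:
  fixes a m :: real
  assumes "a \<ge> 0" "m > 0"
  shows "a * ln (a / m) \<le> a * (a / m - 1)"
proof (cases "a = 0")
  case False
  then have "ln (a / m) \<le> a / m - 1" using assms by (intro ln_le_minus_one) auto
  then show ?thesis using assms by (intro mult_left_mono) auto
qed simp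

lemma ln_one_plus_le_sqrt:
  fixes x :: real
  assumes "x \<ge> 0"
  shows "ln (1 + x) \<le> 2 * sqrt x"
proof -
  have "1 + x \<le> (1 + sqrt x)\<^sup>2" using assms by (simp add: power2_eq_square algebra_simps)
  then have "ln (1 + x) \<le> ln ((1 + sqrt x)\<^sup>2)" using assms by (intro ln_mono) auto
  also have "\<dots> = 2 * ln (1 + sqrt x)" using assms by (simp add: ln_realpow)
  also have "\<dots> \<le> 2 * sqrt x" using assms ln_add_one_self_le_self[of "sqrt x"] by simp
  finally show ?thesis .
qed

lemma mult_ln_ratio_le_sqrt:
  fixes a b :: real
  assumes "a \<ge> 0" "b \<ge> 0"
  shows "a * ln ((a + b) / a) \<le> 2 * sqrt (a * b)"
proof (cases "a = 0")
  case False
  then have a: "a > 0" using assms by simp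
  have "a * sqrt (b / a) = sqrt a * (sqrt a * sqrt (b / a))"
    using a by (simp flip: mult.assoc)
  also have "sqrt a * sqrt (b / a) = sqrt b" using a by (simp flip: real_sqrt_mult)
  finally have sqrt_eq: "a * sqrt (b / a) = sqrt (a * b)" by (simp add: real_sqrt_mult)
  have "(a + b) / a = 1 + b / a" using a by (simp add: field_simps)
  then have "a * ln ((a + b) / a) \<le> a * (2 * sqrt (b / a))"
    using ln_one_plus_le_sqrt[of "b / a"] a assms by (intro mult_left_mono) auto
  then show ?thesis using sqrt_eq by simp
qed simp

lemma mult_ln_ratio_nonneg:
  fixes a b :: real
  assumes "a \<ge> 0" "b \<ge> 0"
  shows "0 \<le> a * ln ((a + b) / a)"
proof (cases "a = 0")
  case False
  then have "1 \<le> (a + b) / a" using assms by (simp add: field_simps)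
  then show ?thesis using assms by simp
qed simp

lemma sq_diff_div_sum_le:
  fixes p r :: real
  assumes "p \<ge> 0" "r \<ge> 0" "p + r > 0"
  shows "(p - r)\<^sup>2 / (p + r) \<le> 2 * (p + r - 2 * sqrt (p * r))"
proof -
  define a b where "a = sqrt p" and "b = sqrt r"
  have pr: "p = a\<^sup>2" "r = b\<^sup>2" "sqrt (p * r) = a * b"
    using assms by (simp_all add: a_def b_def real_sqrt_mult)
  have "(a + b)\<^sup>2 \<le> 2 * (a\<^sup>2 + b\<^sup>2)"
    using zero_le_power2[of "a - b"] by (simp add: power2_eq_square algebra_simps)
  then have "(a - b)\<^sup>2 * (a + b)\<^sup>2 \<le> (a - b)\<^sup>2 * (2 * (a\<^sup>2 + b\<^sup>2))"
    by (intro mult_left_mono) auto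
  moreover have "(p - r)\<^sup>2 = (a - b)\<^sup>2 * (a + b)\<^sup>2"
    unfolding pr(1,2) by (simp add: power2_eq_square algebra_simps)
  ultimately have "(p - r)\<^sup>2 \<le> (a - b)\<^sup>2 * (2 * (a\<^sup>2 + b\<^sup>2))" by simp
  also have "\<dots> = 2 * (a\<^sup>2 + b\<^sup>2 - 2 * (a * b)) * (a\<^sup>2 + b\<^sup>2)"
    by (simp add: power2_eq_square algebra_simps)
  also have "\<dots> = 2 * (p + r - 2 * sqrt (p * r)) * (p + r)"
    by (simp only: pr(3)) (simp add: pr(1,2))
  finally show ?thesis using assms by (simp add: divide_le_eq)
qed

lemma cap_term_nonneg:
  assumes "p \<ge> 0" "r \<ge> 0"
  shows "0 \<le> cap_term p r"
proof (cases "p + r = 0")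
  case False
  then have pr: "p + r > 0" using assms by simp
  then have m: "(p + r) / 2 > 0" by simp
  have "(p - (p + r) / 2) + (r - (p + r) / 2)
        \<le> p * ln (p / ((p + r) / 2)) + r * ln (r / ((p + r) / 2))"
    using mult_ln_divide_ge[OF assms(1) m] mult_ln_divide_ge[OF assms(2) m] by linarith
  then have "0 \<le> p * ln (p / ((p + r) / 2)) + r * ln (r / ((p + r) / 2))" by simp
  then show ?thesis unfolding cap_term_eq_ln[OF assms pr, symmetric] by (simp add: zero_le_mult_iff)
qed (use assms in \<open>simp add: add_nonneg_eq_0_iff\<close>)

lemma cap_term_le_bhatt_gap:
  assumes "p \<ge> 0" "r \<ge> 0"
  shows "cap_term p r \<le> (2 / ln 2) * ((p + r) / 2 - sqrt (p * r))"
proof (cases "p + r = 0")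
  case False
  then have pr: "p + r > 0" using assms by simp
  then have m: "(p + r) / 2 > 0" by simp
  have "2 * ln 2 * cap_term p r
        \<le> p * (p / ((p + r) / 2) - 1) + r * (r / ((p + r) / 2) - 1)"
    unfolding cap_term_eq_ln[OF assms pr]
    using mult_ln_divide_le[OF assms(1) m] mult_ln_divide_le[OF assms(2) m] by linarith
  also have "\<dots> = (2 * p * p + 2 * r * r) / (p + r) - (p + r)"
    by (simp only: divide_divide_eq_right) (simp add: algebra_simps add_divide_distrib)
  also have "\<dots> = (2 * p * p + 2 * r * r - (p + r) * (p + r)) / (p + r)"
    using pr by (simp add: diff_divide_distrib)
  also have "\<dots> = (p - r)\<^sup>2 / (p + r)"
    by (simp add: power2_eq_square algebra_simps)
  also have "\<dots> \<le> 2 * (p + r - 2 * sqrt (p * r))"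
    by (rule sq_diff_div_sum_le[OF assms pr])
  finally show ?thesis by (simp add: field_simps)
qed (use assms in \<open>simp add: add_nonneg_eq_0_iff\<close>)

lemma cap_term_half_sum_bounds:
  assumes "p \<ge> 0" "r \<ge> 0"
  shows "(p + r) / 2 \<le> cap_term p r + (2 / ln 2) * sqrt (p * r)"
    and "cap_term p r \<le> (p + r) / 2"
proof -
  have "(p + r) / 2 - cap_term p r \<le> (2 / ln 2) * sqrt (p * r) \<and> cap_term p r \<le> (p + r) / 2"
  proof (cases "p + r = 0")
    case False
    then have pr: "p + r > 0" using assms by simp
    have ratio: "a * ln 2 - a * ln (a / ((p + r) / 2)) = a * ln ((p + r) / a)"
      if "a \<ge> 0" for a
      using that pr by (cases "a = 0") (simp_all add: ln_div ln_mult algebra_simps)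
    have "2 * ln 2 * ((p + r) / 2 - cap_term p r) = p * ln ((p + r) / p) + r * ln ((r + p) / r)"
      using cap_term_eq_ln[OF assms pr] ratio[OF assms(1)] ratio[OF assms(2)]
      by (simp add: algebra_simps)
    moreover have "p * ln ((p + r) / p) + r * ln ((r + p) / r) \<le> 4 * sqrt (p * r)"
      using mult_ln_ratio_le_sqrt[OF assms] mult_ln_ratio_le_sqrt[OF assms(2,1)]
      by (simp add: mult.commute)
    moreover have "0 \<le> p * ln ((p + r) / p) + r * ln ((r + p) / r)"
      using mult_ln_ratio_nonneg[OF assms] mult_ln_ratio_nonneg[OF assms(2,1)] by simp
    ultimately have "2 * ln 2 * ((p + r) / 2 - cap_term p r) \<le> 4 * sqrt (p * r)"
      "0 \<le> 2 * ln 2 * ((p + r) / 2 - cap_term p r)" by simp_all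
    then show ?thesis
      by (simp add: le_divide_eq mult.commute zero_le_mult_iff)
  qed (use assms in \<open>simp add: add_nonneg_eq_0_iff\<close>)
  then show "(p + r) / 2 \<le> cap_term p r + (2 / ln 2) * sqrt (p * r)"
    and "cap_term p r \<le> (p + r) / 2" by linarith+
qed

text \<open>The chain rule at a single output pair \<open>(y, z)\<close>, with \<open>p, r = W(y|0), W(y|1)\<close> and
  \<open>v, t = V(z|0), V(z|1)\<close>: the left-hand side collects the letters \<open>(y, z)\<close> of \<open>(W,V)\<^sup>-\<close> and
  \<open>(y, z, 0)\<close>, \<open>(y, z, 1)\<close> of \<open>(W,V)\<^sup>+\<close>.\<close>

lemma cap_term_chain:
  fixes p r v t :: real
  assumes "p \<ge> 0" "r \<ge> 0" "v \<ge> 0" "t \<ge> 0"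
  shows "cap_term ((p * v + r * t) / 2) ((r * v + p * t) / 2)
           + cap_term (p * v / 2) (r * t / 2) + cap_term (r * v / 2) (p * t / 2)
       = ((v + t) / 2) * cap_term p r + ((p + r) / 2) * cap_term v t"
proof -
  have "((p * v + r * t) / 2 + (r * v + p * t) / 2) / 2 = ((p + r) / 2) * ((v + t) / 2)"
    by (simp add: field_simps)
  then have mid: "xlogx (((p * v + r * t) / 2 + (r * v + p * t) / 2) / 2)
      = ((p + r) / 2) * xlogx ((v + t) / 2) + ((v + t) / 2) * xlogx ((p + r) / 2)"
    using assms by (simp only:) (intro xlogx_mult, auto)
  have halves: "xlogx ((a / 2 + b / 2) / 2) = (xlogx ((a + b) / 2) - (a + b) / 2) / 2"
    if "a \<ge> 0" "b \<ge> 0" for a b :: real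
    using xlogx_half[of "(a + b) / 2"] that by (simp add: add_divide_distrib)
  have prod: "xlogx (a * b / 2) = (a * xlogx b + b * xlogx a - a * b) / 2"
    if "a \<ge> 0" "b \<ge> 0" for a b :: real
    using xlogx_half[of "a * b"] xlogx_mult[OF that] that by simp
  have nn: "0 \<le> p * v" "0 \<le> r * t" "0 \<le> r * v" "0 \<le> p * t" using assms by auto
  show ?thesis
    unfolding cap_term_def mid halves[OF nn(1,2)] halves[OF nn(3,4)]
      prod[OF assms(1,3)] prod[OF assms(2,4)] prod[OF assms(2,3)] prod[OF assms(1,4)]
    by (simp add: field_simps)
qed

subsection \<open>Unconditional sums\<close>

lemma sum_UNIV_bool: "(\<Sum>x\<in>UNIV. f x) = f False + f True"
  by (simp add: UNIV_bool add.commute)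

lemma nonneg_has_sum_pairs:
  fixes f :: "'a \<times> 'b \<Rightarrow> real"
  assumes rows: "\<And>x. ((\<lambda>y. f (x, y)) has_sum g x) UNIV"
    and total: "(g has_sum S) UNIV"
    and nonneg: "\<And>q. 0 \<le> f q"
  shows "(f has_sum S) UNIV"
proof -
  have "f summable_on UNIV \<times> UNIV"
    by (rule summable_on_SigmaI[OF rows]) (use total nonneg in \<open>auto simp: summable_on_def\<close>)
  then show ?thesis using has_sum_SigmaI[OF rows total] by simp
qed

lemma nonneg_has_sum_product:
  fixes f :: "'a \<Rightarrow> real" and g :: "'b \<Rightarrow> real"
  assumes "(f has_sum a) UNIV" "(g has_sum b) UNIV" "\<And>x. 0 \<le> f x" "\<And>y. 0 \<le> g y"
  shows "((\<lambda>(x, y). f x * g y) has_sum a * b) UNIV"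
  using assms
  by (intro nonneg_has_sum_pairs[where g = "\<lambda>x. f x * b"])
     (auto intro: has_sum_cmult_left has_sum_cmult_right)

lemma nonneg_has_sum_bool_pairs:
  fixes G :: "bool \<Rightarrow> 'b \<Rightarrow> real"
  assumes "\<And>u. (G u has_sum s u) UNIV" "\<And>u v. 0 \<le> G u v"
  shows "((\<lambda>(u, v). G u v) has_sum s False + s True) UNIV"
  using assms
  by (intro nonneg_has_sum_pairs[where g = s]) (auto intro: has_sum_finiteI simp: UNIV_bool)

lemma has_sum_iff_reindex_support:
  assumes "inj h" and "\<And>w. w \<notin> range h \<Longrightarrow> F w = 0"
  shows "(F has_sum s) UNIV \<longleftrightarrow> ((F \<circ> h) has_sum s) UNIV"
proof -
  have "(F has_sum s) UNIV \<longleftrightarrow> (F has_sum s) (range h)"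
    by (rule has_sum_cong_neutral) (use assms in auto)
  also have "\<dots> \<longleftrightarrow> ((F \<circ> h) has_sum s) UNIV"
    by (rule has_sum_reindex) (use assms in auto)
  finally show ?thesis .
qed

lemma has_sum_bool_pairsD:
  fixes G :: "bool \<Rightarrow> 'b \<Rightarrow> real"
  assumes "((\<lambda>(u, v). G u v) has_sum S) UNIV"
  shows "G u summable_on UNIV" and "S = (\<Sum>\<^sub>\<infinity>v. G False v) + (\<Sum>\<^sub>\<infinity>v. G True v)"
proof -
  have pairs: "((\<lambda>(u, v). G u v) has_sum S) (UNIV \<times> UNIV)" using assms by simp
  then have "(\<lambda>(u, v). G u v) summable_on UNIV \<times> UNIV"
    unfolding summable_on_def by blast
  from summable_on_SigmaD1[OF this UNIV_I] have rows: "G u summable_on UNIV" for u .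
  then show "G u summable_on UNIV" .
  have "((\<lambda>u. \<Sum>\<^sub>\<infinity>v. G u v) has_sum S) UNIV"
    by (rule has_sum_SigmaD[OF pairs]) (use rows in simp)
  moreover have "((\<lambda>u. \<Sum>\<^sub>\<infinity>v. G u v) has_sum (\<Sum>\<^sub>\<infinity>v. G False v) + (\<Sum>\<^sub>\<infinity>v. G True v)) UNIV"
    by (rule has_sum_finiteI) (simp_all add: sum_UNIV_bool)
  ultimately show "S = (\<Sum>\<^sub>\<infinity>v. G False v) + (\<Sum>\<^sub>\<infinity>v. G True v)"
    by (rule has_sum_unique)
qed

subsection \<open>Capacity and Bhattacharyya parameter of a channel\<close>

definition output_prob :: "'o channel \<Rightarrow> 'o \<Rightarrow> real" where
  "output_prob W y = (W False y + W True y) / 2"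

definition cap_density :: "'o channel \<Rightarrow> 'o \<Rightarrow> real" where
  "cap_density W y = cap_term (W False y) (W True y)"

definition bhatt_density :: "'o channel \<Rightarrow> 'o \<Rightarrow> real" where
  "bhatt_density W y = sqrt (W False y * W True y)"

definition bhattacharyya :: "'o channel \<Rightarrow> real" where
  "bhattacharyya W = (\<Sum>\<^sub>\<infinity>y. bhatt_density W y)"

lemma sym_cap_eq_infsum_cap_density:
  assumes "\<And>x y. 0 \<le> W x y"
  shows "sym_cap W = (\<Sum>\<^sub>\<infinity>y. cap_density W y)"
  unfolding sym_cap_def cap_density_def
  by (rule infsum_cong) (simp only: sum_UNIV_bool sym_cap_summand_eq_cap_term assms)

context
  fixes W :: "'o channel"
  assumes channel: "is_channel W"
begin

lemma channel_nonneg: "0 \<le> W x y"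
  using channel by (simp add: is_channel_def)

lemma channel_has_sum: "(W x has_sum 1) UNIV"
  using channel by (simp add: is_channel_def)

lemma output_prob_has_sum: "(output_prob W has_sum 1) UNIV"
proof -
  have "((\<lambda>y. (W False y + W True y) / 2) has_sum (1 + 1) / 2) UNIV"
    by (intro has_sum_divide_const has_sum_add channel_has_sum)
  then show ?thesis by (simp add: output_prob_def[abs_def])
qed

lemma cap_density_nonneg: "0 \<le> cap_density W y"
  unfolding cap_density_def by (intro cap_term_nonneg channel_nonneg)

lemma cap_density_le_output_prob: "cap_density W y \<le> output_prob W y"
  unfolding cap_density_def output_prob_def
  by (intro cap_term_half_sum_bounds(2) channel_nonneg)

lemma bhatt_density_nonneg: "0 \<le> bhatt_density W y"
  unfolding bhatt_density_def using channel_nonneg by simp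

lemma bhatt_density_le_output_prob: "bhatt_density W y \<le> output_prob W y"
  unfolding bhatt_density_def output_prob_def
  using arith_geo_mean_sqrt[OF channel_nonneg channel_nonneg] by simp

lemma has_sum_le_output_prob:
  assumes "\<And>y. 0 \<le> f y" "\<And>y. f y \<le> output_prob W y"
  shows "(f has_sum (\<Sum>\<^sub>\<infinity>y. f y)) UNIV"
proof -
  have "f summable_on UNIV"
    by (rule summable_on_comparison_test[of "output_prob W"])
       (use output_prob_has_sum assms in \<open>auto simp: summable_on_def\<close>)
  then show ?thesis by simp
qed

lemma sym_cap_has_sum: "(cap_density W has_sum sym_cap W) UNIV"
  unfolding sym_cap_eq_infsum_cap_density[OF channel_nonneg]
  by (intro has_sum_le_output_prob cap_density_nonneg cap_density_le_output_prob)

lemma bhattacharyya_has_sum: "(bhatt_density W has_sum bhattacharyya W) UNIV"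
  unfolding bhattacharyya_def
  by (intro has_sum_le_output_prob bhatt_density_nonneg bhatt_density_le_output_prob)

lemma sym_cap_nonneg: "0 \<le> sym_cap W"
  using has_sum_nonneg[OF sym_cap_has_sum] cap_density_nonneg by blast

lemma sym_cap_le_1: "sym_cap W \<le> 1"
  using has_sum_mono[OF sym_cap_has_sum output_prob_has_sum] cap_density_le_output_prob by blast

lemma bhattacharyya_nonneg: "0 \<le> bhattacharyya W"
  using has_sum_nonneg[OF bhattacharyya_has_sum] bhatt_density_nonneg by blast

lemma bhattacharyya_le_1: "bhattacharyya W \<le> 1"
  using has_sum_mono[OF bhattacharyya_has_sum output_prob_has_sum] bhatt_density_le_output_prob
  by blast

lemma one_minus_sym_cap_le_bhattacharyya: "1 - sym_cap W \<le> (2 / ln 2) * bhattacharyya W"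
proof -
  have "1 \<le> sym_cap W + (2 / ln 2) * bhattacharyya W"
    using cap_term_half_sum_bounds(1)[OF channel_nonneg channel_nonneg]
    by (intro has_sum_mono[OF output_prob_has_sum
          has_sum_add[OF sym_cap_has_sum has_sum_cmult_right[OF bhattacharyya_has_sum]]])
       (simp add: output_prob_def cap_density_def bhatt_density_def)
  then show ?thesis by simp
qed

lemma sym_cap_le_one_minus_bhattacharyya: "sym_cap W \<le> (2 / ln 2) * (1 - bhattacharyya W)"
proof -
  have "sym_cap W + (2 / ln 2) * bhattacharyya W \<le> (2 / ln 2) * 1"
    using cap_term_le_bhatt_gap[OF channel_nonneg channel_nonneg]
    by (intro has_sum_mono[OF has_sum_add[OF sym_cap_has_sum
          has_sum_cmult_right[OF bhattacharyya_has_sum]] has_sum_cmult_right[OF output_prob_has_sum]])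
       (simp add: output_prob_def cap_density_def bhatt_density_def algebra_simps)
  then show ?thesis using right_diff_distrib[of "2 / ln 2" 1 "bhattacharyya W"] by linarith
qed

end

subsection \<open>Channels with a partially used output alphabet\<close>

lemma is_channel_reindex_support:
  assumes "inj h" and "\<And>x w. w \<notin> range h \<Longrightarrow> V x w = 0"
    and "\<And>x w. 0 \<le> V x w" and "\<And>x. (V x \<circ> h has_sum 1) UNIV"
  shows "is_channel V"
  unfolding is_channel_def using assms has_sum_iff_reindex_support[OF assms(1)] by blast

lemma sym_cap_reindex_support:
  assumes "is_channel V" "inj h" "\<And>x w. w \<notin> range h \<Longrightarrow> V x w = 0"
  shows "(cap_density V \<circ> h has_sum sym_cap V) UNIV"
proof -
  have "cap_density V w = 0" if "w \<notin> range h" for w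
    using assms(3)[OF that] by (simp add: cap_density_def)
  then show ?thesis using sym_cap_has_sum[OF assms(1)] has_sum_iff_reindex_support[OF assms(2)]
    by blast
qed

lemma bhattacharyya_reindex_support:
  assumes "is_channel V" "inj h" "\<And>x w. w \<notin> range h \<Longrightarrow> V x w = 0"
  shows "(bhatt_density V \<circ> h has_sum bhattacharyya V) UNIV"
proof -
  have "bhatt_density V w = 0" if "w \<notin> range h" for w
    using assms(3)[OF that] by (simp add: bhatt_density_def)
  then show ?thesis using bhattacharyya_has_sum[OF assms(1)] has_sum_iff_reindex_support[OF assms(2)]
    by blast
qed

lemma inj_Base: "inj Base"
  by (auto intro: injI)

lemma inj_MinusOut: "inj (\<lambda>(y, z). MinusOut y z)"
  by (auto intro: injI)

lemma inj_PlusOut: "inj (\<lambda>(u, y, z). PlusOut y z u)"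
  by (auto intro: injI)

lemma lift_chan_Base [simp]: "lift_chan W x (Base y) = W x y"
  by (simp add: lift_chan_def)

lemma lift_chan_off_range: "w \<notin> range Base \<Longrightarrow> lift_chan W x w = 0"
  by (cases w) (auto simp: lift_chan_def)

lemma chan_minus_MinusOut:
  "chan_minus W V x (MinusOut y z) = (W x y * V False z + W (\<not> x) y * V True z) / 2"
  by (simp add: chan_minus_def sum_UNIV_bool)

lemma chan_minus_off_range: "w \<notin> range (\<lambda>(y, z). MinusOut y z) \<Longrightarrow> chan_minus W V x w = 0"
  by (cases w) (auto simp: chan_minus_def)

lemma chan_plus_PlusOut: "chan_plus W V x (PlusOut y z u) = W (u \<noteq> x) y * V x z / 2"
  by (simp add: chan_plus_def)

lemma chan_plus_off_range: "w \<notin> range (\<lambda>(u, y, z). PlusOut y z u) \<Longrightarrow> chan_plus W V x w = 0"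
  by (cases w) (auto simp: chan_plus_def image_iff)

context
  fixes W :: "'y channel"
  assumes channel: "is_channel W"
begin

lemma is_channel_lift_chan: "is_channel (lift_chan W)"
proof (rule is_channel_reindex_support[OF inj_Base lift_chan_off_range])
  show "0 \<le> lift_chan W x w" for x w
    by (cases w) (simp_all add: lift_chan_def channel_nonneg[OF channel])
  show "(lift_chan W x \<circ> Base has_sum 1) UNIV" for x
    using channel_has_sum[OF channel] by (simp add: comp_def)
qed

lemma sym_cap_lift_chan: "sym_cap (lift_chan W) = sym_cap W"
proof -
  have "cap_density (lift_chan W) \<circ> Base = cap_density W"
    by (simp add: fun_eq_iff cap_density_def)
  then show ?thesis
    using sym_cap_reindex_support[OF is_channel_lift_chan inj_Base lift_chan_off_range]
      sym_cap_has_sum[OF channel] has_sum_unique by metis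
qed

end

context
  fixes W V :: "'y out channel"
  assumes W: "is_channel W" and V: "is_channel V"
begin

lemma channel_product_has_sum: "((\<lambda>(y, z). W a y * V b z) has_sum 1) UNIV"
  using nonneg_has_sum_product[OF channel_has_sum[OF W] channel_has_sum[OF V]
      channel_nonneg[OF W] channel_nonneg[OF V]] by simp

lemma is_channel_chan_minus: "is_channel (chan_minus W V)"
proof (rule is_channel_reindex_support[OF inj_MinusOut chan_minus_off_range])
  show "0 \<le> chan_minus W V x w" for x w
    using channel_nonneg[OF W] channel_nonneg[OF V]
    by (cases w) (auto simp: chan_minus_def intro!: sum_nonneg)
  show "(chan_minus W V x \<circ> (\<lambda>(y, z). MinusOut y z) has_sum 1) UNIV" for x
  proof -
    have "((\<lambda>q. ((\<lambda>(y, z). W x y * V False z) q + (\<lambda>(y, z). W (\<not> x) y * V True z) q) / 2)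
        has_sum (1 + 1) / 2) UNIV"
      by (intro has_sum_divide_const has_sum_add channel_product_has_sum)
    then show ?thesis by (simp add: comp_def case_prod_unfold chan_minus_MinusOut)
  qed
qed

lemma is_channel_chan_plus: "is_channel (chan_plus W V)"
proof (rule is_channel_reindex_support[OF inj_PlusOut chan_plus_off_range])
  show "0 \<le> chan_plus W V x w" for x w
    using channel_nonneg[OF W] channel_nonneg[OF V] by (cases w) (auto simp: chan_plus_def)
  show "(chan_plus W V x \<circ> (\<lambda>(u, y, z). PlusOut y z u) has_sum 1) UNIV" for x
  proof -
    have "((\<lambda>(u, q). (\<lambda>(y, z). W (u \<noteq> x) y * V x z) q / 2) has_sum 1 / 2 + 1 / 2) UNIV"
      using channel_nonneg[OF W] channel_nonneg[OF V]
      by (intro nonneg_has_sum_bool_pairs has_sum_divide_const channel_product_has_sum)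
         (auto simp: case_prod_unfold)
    then show ?thesis by (simp add: comp_def case_prod_unfold chan_plus_PlusOut)
  qed
qed

lemma bhattacharyya_chan_plus: "bhattacharyya (chan_plus W V) = bhattacharyya W * bhattacharyya V"
proof -
  have density: "bhatt_density (chan_plus W V) (PlusOut y z u)
      = bhatt_density W y * bhatt_density V z / 2" for y z u
    by (cases u) (simp_all add: bhatt_density_def chan_plus_PlusOut real_sqrt_mult
        real_sqrt_divide mult_ac)
  have "((\<lambda>(u :: bool, q). (\<lambda>(y, z). bhatt_density W y * bhatt_density V z) q / 2) has_sum
      bhattacharyya W * bhattacharyya V / 2 + bhattacharyya W * bhattacharyya V / 2) UNIV"
    using bhatt_density_nonneg[OF W] bhatt_density_nonneg[OF V]
    by (intro nonneg_has_sum_bool_pairs has_sum_divide_const nonneg_has_sum_product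
        bhattacharyya_has_sum W V) (auto simp: case_prod_unfold)
  then have "(bhatt_density (chan_plus W V) \<circ> (\<lambda>(u, y, z). PlusOut y z u) has_sum
      bhattacharyya W * bhattacharyya V) UNIV"
    by (simp add: comp_def case_prod_unfold density mult.commute)
  then show ?thesis
    using bhattacharyya_reindex_support[OF is_channel_chan_plus inj_PlusOut chan_plus_off_range]
      has_sum_unique by metis
qed

lemma sym_cap_chan_minus_plus:
  "sym_cap (chan_minus W V) + sym_cap (chan_plus W V) = sym_cap W + sym_cap V"
proof -
  define A where "A = cap_density (chan_minus W V) \<circ> (\<lambda>(y, z). MinusOut y z)"
  define G where "G u = (\<lambda>(y, z). cap_density (chan_plus W V) (PlusOut y z u))" for u
  have A_sum: "(A has_sum sym_cap (chan_minus W V)) UNIV"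
    unfolding A_def
    by (rule sym_cap_reindex_support[OF is_channel_chan_minus inj_MinusOut chan_minus_off_range])
  have "(\<lambda>(u, q). G u q) = cap_density (chan_plus W V) \<circ> (\<lambda>(u, y, z). PlusOut y z u)"
    by (auto simp: G_def fun_eq_iff)
  then have "((\<lambda>(u, q). G u q) has_sum sym_cap (chan_plus W V)) UNIV"
    using sym_cap_reindex_support[OF is_channel_chan_plus inj_PlusOut chan_plus_off_range] by simp
  note G_split = has_sum_bool_pairsD[OF this]
  have G_sum: "(G u has_sum (\<Sum>\<^sub>\<infinity>q. G u q)) UNIV" for u
    using G_split(1) by (simp add: summable_iff_has_sum_infsum)
  have "((\<lambda>q. A q + G False q + G True q) has_sum
      sym_cap (chan_minus W V) + sym_cap (chan_plus W V)) UNIV"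
    unfolding G_split(2) add.assoc by (intro has_sum_add A_sum G_sum)
  moreover have "((\<lambda>q. A q + G False q + G True q) has_sum sym_cap W + sym_cap V) UNIV"
  proof -
    have pointwise: "A q + G False q + G True q
        = (\<lambda>(y, z). cap_density W y * output_prob V z) q
          + (\<lambda>(y, z). output_prob W y * cap_density V z) q" for q
      using cap_term_chain[OF channel_nonneg[OF W, of False] channel_nonneg[OF W, of True]
          channel_nonneg[OF V, of False] channel_nonneg[OF V, of True]]
      by (simp add: A_def G_def case_prod_unfold cap_density_def output_prob_def
          chan_minus_MinusOut chan_plus_PlusOut mult.commute)
    have "((\<lambda>q. (\<lambda>(y, z). cap_density W y * output_prob V z) q
          + (\<lambda>(y, z). output_prob W y * cap_density V z) q) has_sum
        sym_cap W * 1 + 1 * sym_cap V) UNIV"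
      by (intro has_sum_add nonneg_has_sum_product sym_cap_has_sum output_prob_has_sum
          cap_density_nonneg W V)
         (auto simp: output_prob_def intro: add_nonneg_nonneg channel_nonneg[OF W] channel_nonneg[OF V])
    then show ?thesis by (simp only: pointwise) simp
  qed
  ultimately show ?thesis by (rule has_sum_unique)
qed

end

subsection \<open>Polarization\<close>

lemma polarization_dichotomy:
  fixes L R ZL ZR :: "nat \<Rightarrow> real" and c I :: real
  assumes conservation: "\<And>n. L n + R n = 2 * I"
    and L_nonneg: "\<And>n. 0 \<le> L n" and R_le_1: "\<And>n. R n \<le> 1"
    and ZR_nonneg: "\<And>n. 0 \<le> ZR n" and ZL_le_1: "\<And>n. ZL n \<le> 1"
    and ZR_Suc: "\<And>n. ZR (Suc n) = ZL n * ZR n"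
    and R_bound: "\<And>n. 1 - R n \<le> c * ZR n"
    and L_bound: "\<And>n. L n \<le> c * (1 - ZL n)"
  shows "(L \<longlonglongrightarrow> 2 * I - 1 \<and> R \<longlonglongrightarrow> 1 \<and> 1/2 \<le> I)
       \<or> (L \<longlonglongrightarrow> 0 \<and> R \<longlonglongrightarrow> 2 * I \<and> I \<le> 1/2)"
proof -
  have "decseq ZR"
    unfolding decseq_Suc_iff ZR_Suc using mult_right_mono[OF ZL_le_1 ZR_nonneg] by simp
  then obtain d where ZR_lim: "ZR \<longlonglongrightarrow> d" and d_le: "\<And>n. d \<le> ZR n"
    using decseq_convergent[of ZR 0] ZR_nonneg by blast
  have L_eq: "L = (\<lambda>n. 2 * I - R n)" and R_eq: "R = (\<lambda>n. 2 * I - L n)"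
    using conservation by (auto simp: fun_eq_iff algebra_simps)
  show ?thesis
  proof (cases "d = 0")
    case True
    from ZR_lim True have "(\<lambda>n. 1 - c * ZR n) \<longlonglongrightarrow> 1 - c * 0"
      by (simp only:) (intro tendsto_intros)
    then have R_lim: "R \<longlonglongrightarrow> 1"
      using R_bound R_le_1
      by (intro tendsto_sandwich[of "\<lambda>n. 1 - c * ZR n" R sequentially "\<lambda>_. 1"] always_eventually)
         (auto simp: algebra_simps)
    then have L_lim: "L \<longlonglongrightarrow> 2 * I - 1"
      unfolding L_eq by (intro tendsto_intros)
    moreover have "0 \<le> 2 * I - 1"
      using LIMSEQ_le_const[OF L_lim] L_nonneg by blast
    ultimately show ?thesis using R_lim by simp
  next
    case False
    then have d_pos: "d > 0" using LIMSEQ_le_const[OF ZR_lim] ZR_nonneg by force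
    have "(\<lambda>n. ZR (Suc n) / ZR n) \<longlonglongrightarrow> d / d"
      using LIMSEQ_Suc[OF ZR_lim] ZR_lim d_pos by (intro tendsto_intros) auto
    moreover have "ZR (Suc n) / ZR n = ZL n" for n
      using ZR_Suc[of n] d_le[of n] d_pos by simp
    ultimately have "ZL \<longlonglongrightarrow> 1" using d_pos by simp
    then have "(\<lambda>n. c * (1 - ZL n)) \<longlonglongrightarrow> c * (1 - 1)"
      by (intro tendsto_intros)
    then have L_lim: "L \<longlonglongrightarrow> 0"
      by (intro tendsto_sandwich[of "\<lambda>_. 0" L sequentially "\<lambda>n. c * (1 - ZL n)"])
         (auto simp: L_nonneg L_bound)
    then have R_lim: "R \<longlonglongrightarrow> 2 * I"
      unfolding R_eq by (auto intro: tendsto_eq_intros)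
    moreover have "2 * I \<le> 1"
      using LIMSEQ_le_const2[OF R_lim] R_le_1 by blast
    ultimately show ?thesis using L_lim by simp
  qed
qed

lemma LR_Suc:
  "fst (LR W (Suc n)) = chan_minus (fst (LR W n)) (snd (LR W n))"
  "snd (LR W (Suc n)) = chan_plus (fst (LR W n)) (snd (LR W n))"
  by (simp_all add: case_prod_unfold)

declare LR.simps(2) [simp del]

lemma is_channel_LR:
  assumes "is_channel W"
  shows "is_channel (fst (LR W n)) \<and> is_channel (snd (LR W n))"
  by (induction n) (simp_all add: LR_Suc is_channel_lift_chan is_channel_chan_minus
      is_channel_chan_plus assms)

lemma sym_cap_LR_conservation:
  assumes "is_channel W"
  shows "sym_cap (fst (LR W n)) + sym_cap (snd (LR W n)) = 2 * sym_cap W"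
  using is_channel_LR[OF assms]
  by (induction n) (simp_all add: LR_Suc sym_cap_lift_chan sym_cap_chan_minus_plus assms)

theorem proposition1:
  fixes W :: "'y channel"
  assumes "is_channel W"
  shows "\<exists>IL IR.
     (\<lambda>n. sym_cap (fst (LR W n))) \<longlonglongrightarrow> IL \<and>
     (\<lambda>n. sym_cap (snd (LR W n))) \<longlonglongrightarrow> IR \<and>
     (sym_cap W \<ge> 1/2 \<longrightarrow> IL = 2 * sym_cap W - 1 \<and> IR = 1) \<and>
     (sym_cap W \<le> 1/2 \<longrightarrow> IL = 0 \<and> IR = 2 * sym_cap W)"
proof -
  have channels: "is_channel (fst (LR W n))" "is_channel (snd (LR W n))" for n
    using is_channel_LR[OF assms] by auto
  have "((\<lambda>n. sym_cap (fst (LR W n))) \<longlonglongrightarrow> 2 * sym_cap W - 1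
          \<and> (\<lambda>n. sym_cap (snd (LR W n))) \<longlonglongrightarrow> 1 \<and> 1/2 \<le> sym_cap W)
      \<or> ((\<lambda>n. sym_cap (fst (LR W n))) \<longlonglongrightarrow> 0
          \<and> (\<lambda>n. sym_cap (snd (LR W n))) \<longlonglongrightarrow> 2 * sym_cap W \<and> sym_cap W \<le> 1/2)"
  proof (rule polarization_dichotomy[where c = "2 / ln 2"
        and ZL = "\<lambda>n. bhattacharyya (fst (LR W n))" and ZR = "\<lambda>n. bhattacharyya (snd (LR W n))"])
    fix n
    show "bhattacharyya (snd (LR W (Suc n)))
        = bhattacharyya (fst (LR W n)) * bhattacharyya (snd (LR W n))"
      using channels by (simp add: LR_Suc bhattacharyya_chan_plus)
  qed (use channels sym_cap_LR_conservation[OF assms] in \<open>blast intro: sym_cap_nonneg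
      sym_cap_le_1 bhattacharyya_nonneg bhattacharyya_le_1 one_minus_sym_cap_le_bhattacharyya
      sym_cap_le_one_minus_bhattacharyya\<close>)+
  then show ?thesis by force
qed

end
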